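(* Assume $\nabla f$ is $L$-Lipschitz, and consider the SAM flow at a point $(\mathcal G_1,\ldots,\mathcal G_K)$ where not all $g_k$ vanish. Then for all $i,j\in[K]$ with $i\ne j$, $$\frac{d}{dt}\big(\|\mathcal G_i\|_F^2-\|\mathcal G_j\|_F^2\big)=2\rho u\big(\|g_i\|_F^2-\|g_j\|_F^2\big)+R_{ij},$$ where there is a constant $C$ depending only on $\Phi$, $K$, $L$, the Frobenius norms of the current cores and $\|\nabla f(\mathcal T)\|_F$ (with $\mathcal T=\Phi(\mathcal G_1,\ldots,\mathcal G_K)$) such that $|R_{ij}|\le C\rho^2$ for all $\rho\in(0,1]$. (The paper writes the remainder as $O(\rho^2L)$.)
   Context: Let $K\ge 2$. For each $k\in[K]$ let $V_k$ be a finite-dimensional real space of tensors with Frobenius inner product $\langle\cdot,\cdot\rangle_F$ and norm $\|\cdot\|_F$; $[K]=\{1,\ldots,K\}$. Let $\Phi:V_1\times\cdots\times V_K\to\mathbb R^{n_1\times\cdots\times n_d}$ be multilinear, $f:\mathbb R^{n_1\times\cdots\times n_d}\to\mathbb R$ continuously differentiable with $\|\nabla f(\mathcal X)-\nabla f(\mathcal Y)\|_F\le L\|\mathcal X-\mathcal Y\|_F$ for all $\mathcal X,\mathcal Y$, and $F:=f\circ\Phi$. SAM gradient flow with radius $\rho>0$: at a point $(\mathcal G_1,\ldots,\mathcal G_K)$ let $g_k=\nabla_{\mathcal G_k}F(\mathcal G_1,\ldots,\mathcal G_K)$, $u=(\sum_{j=1}^K\|g_j\|_F^2)^{-1/2}$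 (requiring not all $g_j=0$), $\tilde{\mathcal G}_k=\mathcal G_k+\rho u g_k$, $\tilde g_k=\nabla_{\mathcal G_k}F(\tilde{\mathcal G}_1,\ldots,\tilde{\mathcal G}_K)$; the SAM flow is $\frac{d}{dt}\mathcal G_k=-\tilde g_k$ for all $k\in[K]$, and time derivatives above are along this flow at the given point. *)

theory Defs
  imports "HOL-Analysis.Analysis"
begin

text \<open>Cores (G_1,...,G_K) are modelled as functions nat => 'v, where each core space V_k
  is a (finite-dimensional) subspace of a common Euclidean space 'v (inner product = Frobenius
  inner product).\<close>

definition cores :: "nat \<Rightarrow> (nat \<Rightarrow> 'v::real_vector set) \<Rightarrow> (nat \<Rightarrow> 'v) set" where
  "cores K V = {G. (\<forall>k\<in>{1..K}. G k \<in> V k) \<and> (\<forall>k. k \<notin> {1..K} \<longrightarrow> G k = 0)}"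

definition multilinear_on ::
  "nat \<Rightarrow> (nat \<Rightarrow> 'v::real_vector set) \<Rightarrow> ((nat \<Rightarrow> 'v) \<Rightarrow> 'w::real_vector) \<Rightarrow> bool" where
  "multilinear_on K V \<Phi> \<longleftrightarrow>
     (\<forall>G\<in>cores K V. \<forall>k\<in>{1..K}. \<forall>x\<in>V k. \<forall>y\<in>V k. \<forall>c::real.
        \<Phi> (G(k := x + y)) = \<Phi> (G(k := x)) + \<Phi> (G(k := y)) \<and>
        \<Phi> (G(k := c *\<^sub>R x)) = c *\<^sub>R \<Phi> (G(k := x)))"

definition pgrad ::
  "((nat \<Rightarrow> 'v::real_inner) \<Rightarrow> real) \<Rightarrow> (nat \<Rightarrow> 'v set) \<Rightarrow> (nat \<Rightarrow> 'v) \<Rightarrow> nat \<Rightarrow> 'v" where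
  "pgrad F V G k = (THE g. g \<in> V k \<and>
       ((\<lambda>h. F (G(k := G k + h))) has_derivative (\<lambda>h. g \<bullet> h)) (at 0 within V k))"

definition sam_grads ::
  "((nat \<Rightarrow> 'v::real_inner) \<Rightarrow> real) \<Rightarrow> (nat \<Rightarrow> 'v set) \<Rightarrow> nat \<Rightarrow> (nat \<Rightarrow> 'v) \<Rightarrow> nat \<Rightarrow> 'v" where
  "sam_grads F V K G = (\<lambda>k. if k \<in> {1..K} then pgrad F V G k else 0)"

definition sam_u ::
  "((nat \<Rightarrow> 'v::real_inner) \<Rightarrow> real) \<Rightarrow> (nat \<Rightarrow> 'v set) \<Rightarrow> nat \<Rightarrow> (nat \<Rightarrow> 'v) \<Rightarrow> real" where
  "sam_u F V K G = 1 / sqrt (\<Sum>j=1..K. (norm (sam_grads F V K G j))\<^sup>2)"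

definition sam_perturb ::
  "((nat \<Rightarrow> 'v::real_inner) \<Rightarrow> real) \<Rightarrow> (nat \<Rightarrow> 'v set) \<Rightarrow> nat \<Rightarrow> real \<Rightarrow> (nat \<Rightarrow> 'v) \<Rightarrow> nat \<Rightarrow> 'v" where
  "sam_perturb F V K \<rho> G = (\<lambda>k. G k + (\<rho> * sam_u F V K G) *\<^sub>R sam_grads F V K G k)"

text \<open>SAM gradients g~_k = grad_{G_k} F(G~); the SAM flow is dG_k/dt = - g~_k.\<close>
definition sam_tgrads ::
  "((nat \<Rightarrow> 'v::real_inner) \<Rightarrow> real) \<Rightarrow> (nat \<Rightarrow> 'v set) \<Rightarrow> nat \<Rightarrow> real \<Rightarrow> (nat \<Rightarrow> 'v) \<Rightarrow> nat \<Rightarrow> 'v" where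
  "sam_tgrads F V K \<rho> G = sam_grads F V K (sam_perturb F V K \<rho> G)"

end

theory Submission
  imports Defs
begin

text \<open>Along the SAM flow, d/dt ||G_k||^2 = -2 <G_k, g~_k>. Multilinearity gives an Euler identity:
  <G~_k, g~_k> = <grad f(Phi G~), Phi G~> for every k, so this term cancels in the difference, and
  substituting G_k = G~_k - rho u g_k leaves 2 rho u (<g_i, g~_i> - <g_j, g~_j>). Replacing g~_k by g_k
  costs 2 rho u <g_k, g~_k - g_k>, where u ||g_k|| <= 1 and ||g~_k - g_k|| = O(rho): the perturbed point
  is rho-close to G, a multilinear map on finite-dimensional spaces is bounded by M prod ||G_l|| and hence
  Lipschitz on bounded sets, and grad f is L-Lipschitz.\<close>

lemma cores_fun_upd:
  assumes "X \<in> cores K V" "k \<in> {1..K}" "x \<in> V k"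
  shows "X(k := x) \<in> cores K V"
  using assms unfolding cores_def by auto

lemma cores_slot: "X \<in> cores K V \<Longrightarrow> k \<in> {1..K} \<Longrightarrow> X k \<in> V k"
  unfolding cores_def by auto

lemma finite_cores_with_slots_in:
  assumes "\<And>l. l \<in> {1..K} \<Longrightarrow> finite (B l)"
  shows "finite {X \<in> cores K V. \<forall>l\<in>{1..K}. X l \<in> B l}"
proof (rule finite_subset)
  let ?extend = "\<lambda>X l. if l \<in> {1..K} then X l else 0"
  show "{X \<in> cores K V. \<forall>l\<in>{1..K}. X l \<in> B l} \<subseteq> ?extend ` PiE {1..K} B"
  proof
    fix X assume X: "X \<in> {X \<in> cores K V. \<forall>l\<in>{1..K}. X l \<in> B l}"
    then have "X = ?extend (restrict X {1..K})"
      unfolding cores_def by auto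
    moreover have "restrict X {1..K} \<in> PiE {1..K} B"
      using X by auto
    ultimately show "X \<in> ?extend ` PiE {1..K} B" by blast
  qed
  show "finite (?extend ` PiE {1..K} B)"
    using assms by (intro finite_imageI finite_PiE) auto
qed

definition orthonormal_basis_of :: "'v::real_inner set \<Rightarrow> 'v set \<Rightarrow> bool" where
  "orthonormal_basis_of B S \<longleftrightarrow> finite B \<and> B \<subseteq> S \<and> (\<forall>b\<in>B. norm b = 1) \<and>
     (\<forall>x\<in>S. (\<Sum>b\<in>B. (x \<bullet> b) *\<^sub>R b) = x)"

lemma subspace_has_orthonormal_basis:
  fixes S :: "'v::euclidean_space set"
  assumes "subspace S"
  obtains B where "orthonormal_basis_of B S"
proof -
  obtain B where B: "B \<subseteq> S" "pairwise orthogonal B" "\<And>b. b \<in> B \<Longrightarrow> norm b = 1"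
    "independent B" "span B = S"
    using orthonormal_basis_subspace[OF assms] by metis
  then have "finite B" by (simp add: independent_imp_finite)
  with B have "orthonormal_basis_of B S"
    unfolding orthonormal_basis_of_def using orthonormal_basis_expand[of B] by auto
  then show ?thesis by (rule that)
qed

lemma abs_inner_le_of_orthonormal_basis:
  "orthonormal_basis_of B S \<Longrightarrow> b \<in> B \<Longrightarrow> \<bar>x \<bullet> b\<bar> \<le> norm x"
  unfolding orthonormal_basis_of_def using Cauchy_Schwarz_ineq2[of x b] by auto

lemma has_derivative_within_subspace_unique:
  fixes F :: "'a::real_normed_vector \<Rightarrow> 'b::real_normed_vector"
  assumes S: "subspace S" "x \<in> S" "h \<in> S"
    and F': "(F has_derivative F') (at x within S)"
    and F'': "(F has_derivative F'') (at x within S)"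
  shows "F' h = F'' h"
proof -
  let ?line = "\<lambda>s::real. x + s *\<^sub>R h"
  have line: "(?line has_derivative (\<lambda>s. s *\<^sub>R h)) (at 0)"
    by (auto intro!: derivative_eq_intros)
  have "range ?line \<subseteq> S"
    using S by (auto intro: subspace_add subspace_scale)
  then have "(F has_derivative D) (at (?line 0) within range ?line)"
    if "(F has_derivative D) (at x within S)" for D
    using has_derivative_subset[OF that] by simp
  from this[OF F'] this[OF F''] have
    "((\<lambda>s. F (?line s)) has_derivative (\<lambda>s. F' (s *\<^sub>R h))) (at 0)"
    "((\<lambda>s. F (?line s)) has_derivative (\<lambda>s. F'' (s *\<^sub>R h))) (at 0)"
    by (auto intro: has_derivative_in_compose[OF line])
  from has_derivative_unique[OF this] show ?thesis
    by (metis scaleR_one)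
qed

lemma pgrad_eqI:
  assumes S: "subspace (V k)" and g: "g \<in> V k"
    and F: "((\<lambda>h. F (G(k := G k + h))) has_derivative (\<lambda>h. g \<bullet> h)) (at 0 within V k)"
  shows "pgrad F V G k = g"
  unfolding pgrad_def
proof (rule the_equality)
  show "g \<in> V k \<and> ((\<lambda>h. F (G(k := G k + h))) has_derivative (\<lambda>h. g \<bullet> h)) (at 0 within V k)"
    using g F by blast
next
  fix g' assume g': "g' \<in> V k \<and> ((\<lambda>h. F (G(k := G k + h))) has_derivative (\<lambda>h. g' \<bullet> h)) (at 0 within V k)"
  then have "g' - g \<in> V k"
    using S g subspace_diff by blast
  then have "g' \<bullet> (g' - g) = g \<bullet> (g' - g)"
    using has_derivative_within_subspace_unique[OF S subspace_0[OF S]] g' F by blast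
  then have "(g' - g) \<bullet> (g' - g) = 0"
    by (simp add: inner_diff_left)
  then show "g' = g" by simp
qed

lemma has_real_derivative_norm_power2:
  fixes x :: "real \<Rightarrow> 'a::real_inner"
  assumes "(x has_vector_derivative v) (at t)"
  shows "((\<lambda>s. (norm (x s))\<^sup>2) has_real_derivative 2 * (x t \<bullet> v)) (at t)"
proof -
  note x' = assms[unfolded has_vector_derivative_def]
  have "((\<lambda>s. x s \<bullet> x s) has_derivative (\<lambda>h. x t \<bullet> (h *\<^sub>R v) + (h *\<^sub>R v) \<bullet> x t)) (at t)"
    by (rule has_derivative_inner[OF x' x'])
  moreover have "(\<lambda>h. x t \<bullet> (h *\<^sub>R v) + (h *\<^sub>R v) \<bullet> x t) = (*) (2 * (x t \<bullet> v))"
    by (auto simp: fun_eq_iff inner_commute algebra_simps)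
  ultimately show ?thesis
    unfolding has_field_derivative_def by (simp add: power2_norm_eq_inner)
qed

lemma sam_grads_slot: "k \<in> {1..K} \<Longrightarrow> sam_grads F V K G k = pgrad F V G k"
  unfolding sam_grads_def by simp

lemma sam_u_pos_mult_norm_le:
  assumes "\<exists>k\<in>{1..K}. sam_grads F V K G k \<noteq> 0"
  shows "0 < sam_u F V K G" and "sam_u F V K G * norm (sam_grads F V K G l) \<le> 1"
proof -
  let ?g = "sam_grads F V K G"
  define S where "S = (\<Sum>k=1..K. (norm (?g k))\<^sup>2)"
  have le_S: "(norm (?g k))\<^sup>2 \<le> S" for k
    by (cases "k \<in> {1..K}") (auto simp: S_def sam_grads_def intro: member_le_sum sum_nonneg)
  obtain k where "k \<in> {1..K}" "?g k \<noteq> 0"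
    using assms by blast
  then have "0 < S"
    using le_S[of k] by (smt (verit) zero_less_norm_iff zero_less_power2)
  then show "0 < sam_u F V K G"
    unfolding sam_u_def S_def[symmetric] by simp
  have "norm (?g l) \<le> sqrt S"
    using le_S[of l] by (simp add: real_le_rsqrt)
  with \<open>0 < S\<close> show "sam_u F V K G * norm (?g l) \<le> 1"
    unfolding sam_u_def S_def[symmetric] by (simp add: divide_le_eq_1)
qed

lemma norm_sam_perturb_diff_le:
  assumes "\<exists>k\<in>{1..K}. sam_grads F V K G k \<noteq> 0" "0 \<le> \<rho>"
  shows "norm (sam_perturb F V K \<rho> G l - G l) \<le> \<rho>"
proof -
  have "norm (sam_perturb F V K \<rho> G l - G l) = \<rho> * (sam_u F V K G * norm (sam_grads F V K G l))"
    using assms sam_u_pos_mult_norm_le(1)[OF assms(1)] by (simp add: sam_perturb_def)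
  also have "\<dots> \<le> \<rho>"
    using assms sam_u_pos_mult_norm_le(2)[OF assms(1)] by (simp add: mult_left_le)
  finally show ?thesis .
qed

lemma abs_sam_remainder_le:
  fixes a a' b b' :: "'a::real_inner"
  assumes "0 \<le> \<rho>" "0 \<le> u" "u * norm a \<le> 1" "u * norm b \<le> 1"
    and "norm a' \<le> c * \<rho>" "norm b' \<le> c * \<rho>"
  shows "\<bar>2 * \<rho> * u * (a \<bullet> a' - b \<bullet> b')\<bar> \<le> 4 * c * \<rho>\<^sup>2"
proof -
  have term_le: "\<bar>u * (x \<bullet> x')\<bar> \<le> c * \<rho>" if "u * norm x \<le> 1" "norm x' \<le> c * \<rho>" for x x' :: 'a
  proof -
    have "\<bar>u * (x \<bullet> x')\<bar> \<le> (u * norm x) * norm x'"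
      using assms(2) Cauchy_Schwarz_ineq2[of x x'] by (simp add: abs_mult mult.assoc mult_left_mono)
    also have "\<dots> \<le> 1 * (c * \<rho>)"
      using that by (intro mult_mono) auto
    finally show ?thesis by simp
  qed
  have "\<bar>2 * \<rho> * u * (a \<bullet> a' - b \<bullet> b')\<bar> = 2 * \<rho> * \<bar>u * (a \<bullet> a') - u * (b \<bullet> b')\<bar>"
  proof -
    have "2 * \<rho> * u * (a \<bullet> a' - b \<bullet> b') = (2 * \<rho>) * (u * (a \<bullet> a') - u * (b \<bullet> b'))"
      by (simp add: algebra_simps)
    then show ?thesis
      using assms(1) by (simp only: abs_mult abs_of_nonneg)
  qed
  also have "\<dots> \<le> 2 * \<rho> * (c * \<rho> + c * \<rho>)"
    using assms term_le[of a a'] term_le[of b b'] by (intro mult_left_mono abs_triangle_ineq4[THEN order_trans] add_mono) auto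
  finally show ?thesis
    by (simp add: power2_eq_square algebra_simps)
qed

locale multilinear_cores =
  fixes K :: nat and V :: "nat \<Rightarrow> 'v::euclidean_space set" and \<Phi> :: "(nat \<Rightarrow> 'v) \<Rightarrow> 'w::real_inner"
  assumes subspace_slot: "k \<in> {1..K} \<Longrightarrow> subspace (V k)"
    and multilinear: "multilinear_on K V \<Phi>"
begin

lemma slot_add:
  "X \<in> cores K V \<Longrightarrow> k \<in> {1..K} \<Longrightarrow> x \<in> V k \<Longrightarrow> y \<in> V k \<Longrightarrow>
    \<Phi> (X(k := x + y)) = \<Phi> (X(k := x)) + \<Phi> (X(k := y))"
  using multilinear unfolding multilinear_on_def by blast

lemma slot_scale:
  "X \<in> cores K V \<Longrightarrow> k \<in> {1..K} \<Longrightarrow> x \<in> V k \<Longrightarrow> \<Phi> (X(k := c *\<^sub>R x)) = c *\<^sub>R \<Phi> (X(k := x))"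
  using multilinear unfolding multilinear_on_def by blast

lemma slot_zero: "X \<in> cores K V \<Longrightarrow> k \<in> {1..K} \<Longrightarrow> \<Phi> (X(k := 0)) = 0"
  using slot_scale[of X k 0 0] subspace_0[OF subspace_slot] by simp

lemma slot_diff:
  assumes "X \<in> cores K V" "k \<in> {1..K}" "x \<in> V k" "y \<in> V k"
  shows "\<Phi> (X(k := x - y)) = \<Phi> (X(k := x)) - \<Phi> (X(k := y))"
  using slot_add[OF assms(1,2), of "x - y" y] assms subspace_diff[OF subspace_slot] by simp

lemma slot_sum:
  assumes X: "X \<in> cores K V" and k: "k \<in> {1..K}" and B: "finite B" "B \<subseteq> V k"
  shows "\<Phi> (X(k := \<Sum>b\<in>B. c b *\<^sub>R b)) = (\<Sum>b\<in>B. c b *\<^sub>R \<Phi> (X(k := b)))"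
  using B
proof (induction B rule: finite_induct)
  case empty
  then show ?case using slot_zero[OF X k] by (simp only: sum.empty)
next
  case (insert x B)
  have "(\<Sum>b\<in>B. c b *\<^sub>R b) \<in> V k" "x \<in> V k"
    using insert subspace_slot[OF k] by (auto intro!: subspace_sum subspace_scale)
  then have "\<Phi> (X(k := c x *\<^sub>R x + (\<Sum>b\<in>B. c b *\<^sub>R b)))
      = c x *\<^sub>R \<Phi> (X(k := x)) + \<Phi> (X(k := \<Sum>b\<in>B. c b *\<^sub>R b))"
    using slot_add[OF X k] slot_scale[OF X k] subspace_scale[OF subspace_slot[OF k]] by metis
  moreover have "\<Phi> (X(k := \<Sum>b\<in>B. c b *\<^sub>R b)) = (\<Sum>b\<in>B. c b *\<^sub>R \<Phi> (X(k := b)))"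
    using insert by blast
  ultimately show ?case by (simp only: sum.insert[OF insert.hyps])
qed

lemma slot_expansion:
  assumes "X \<in> cores K V" "k \<in> {1..K}" "orthonormal_basis_of B (V k)"
  shows "\<Phi> X = (\<Sum>b\<in>B. (X k \<bullet> b) *\<^sub>R \<Phi> (X(k := b)))"
proof -
  have "\<Phi> X = \<Phi> (X(k := \<Sum>b\<in>B. (X k \<bullet> b) *\<^sub>R b))"
    using assms cores_slot unfolding orthonormal_basis_of_def by fastforce
  also have "\<dots> = (\<Sum>b\<in>B. (X k \<bullet> b) *\<^sub>R \<Phi> (X(k := b)))"
    using assms unfolding orthonormal_basis_of_def by (intro slot_sum) auto
  finally show ?thesis .
qed

lemma norm_le_by_basis_slot:
  assumes X: "X \<in> cores K V" and k: "k \<in> {1..K}" and B: "orthonormal_basis_of B (V k)"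
    and c: "\<And>b. b \<in> B \<Longrightarrow> norm (\<Phi> (X(k := b))) \<le> c"
  shows "norm (\<Phi> X) \<le> card B * norm (X k) * c"
proof -
  have "norm (\<Phi> X) \<le> (\<Sum>b\<in>B. \<bar>X k \<bullet> b\<bar> * norm (\<Phi> (X(k := b))))"
    unfolding slot_expansion[OF X k B] by (rule order_trans[OF norm_sum]) simp
  also have "\<dots> \<le> (\<Sum>b\<in>B. norm (X k) * c)"
    using abs_inner_le_of_orthonormal_basis[OF B] c by (intro sum_mono mult_mono) auto
  finally show ?thesis by simp
qed

lemma ex_norm_le_prod:
  obtains M where "0 \<le> M" "\<And>X. X \<in> cores K V \<Longrightarrow> norm (\<Phi> X) \<le> M * (\<Prod>l\<in>{1..K}. norm (X l))"
proof -
  have "\<forall>k\<in>{1..K}. \<exists>B. orthonormal_basis_of B (V k)"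
    using subspace_has_orthonormal_basis[OF subspace_slot] by metis
  then obtain B where B: "\<And>k. k \<in> {1..K} \<Longrightarrow> orthonormal_basis_of (B k) (V k)"
    by metis
  have "\<exists>M\<ge>0. \<forall>X\<in>cores K V. (\<forall>l\<in>{m<..K}. X l \<in> B l) \<longrightarrow>
      norm (\<Phi> X) \<le> M * (\<Prod>l\<in>{1..m}. norm (X l))" if "m \<le> K" for m
    using that
  proof (induction m)
    case 0
    let ?S = "{X \<in> cores K V. \<forall>l\<in>{1..K}. X l \<in> B l}"
    have "finite ?S"
      using B by (intro finite_cores_with_slots_in) (simp add: orthonormal_basis_of_def)
    then have "\<forall>X\<in>?S. norm (\<Phi> X) \<le> (\<Sum>Y\<in>?S. norm (\<Phi> Y))"
      by (auto intro: member_le_sum)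
    then show ?case
      by (intro exI[of _ "\<Sum>Y\<in>?S. norm (\<Phi> Y)"]) (auto intro: sum_nonneg)
  next
    case (Suc m)
    then obtain M where "0 \<le> M" and M: "\<And>X. X \<in> cores K V \<Longrightarrow> \<forall>l\<in>{m<..K}. X l \<in> B l \<Longrightarrow>
        norm (\<Phi> X) \<le> M * (\<Prod>l\<in>{1..m}. norm (X l))"
      by auto
    have k: "Suc m \<in> {1..K}" using Suc.prems by simp
    have "norm (\<Phi> X) \<le> card (B (Suc m)) * M * (\<Prod>l\<in>{1..Suc m}. norm (X l))"
      if X: "X \<in> cores K V" and XB: "\<forall>l\<in>{Suc m<..K}. X l \<in> B l" for X
    proof -
      have "norm (\<Phi> (X(Suc m := b))) \<le> M * (\<Prod>l\<in>{1..m}. norm (X l))" if "b \<in> B (Suc m)" for b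
        using M[OF cores_fun_upd[OF X k]] B[OF k] XB that
        by (simp add: orthonormal_basis_of_def subset_iff)
      from norm_le_by_basis_slot[OF X k B[OF k] this] show ?thesis
        by (simp add: prod.nat_ivl_Suc' mult_ac)
    qed
    with \<open>0 \<le> M\<close> show ?case by (intro exI[of _ "card (B (Suc m)) * M"]) auto
  qed
  from this[of K] show ?thesis
    using that by auto
qed

lemma pgrad_comp:
  assumes f: "\<And>x. (f has_derivative (\<lambda>h. df x \<bullet> h)) (at x)"
    and G: "G \<in> cores K V" and k: "k \<in> {1..K}"
  shows pgrad_comp_in_slot: "pgrad (f \<circ> \<Phi>) V G k \<in> V k"
    and inner_pgrad_comp: "\<And>h. h \<in> V k \<Longrightarrow> pgrad (f \<circ> \<Phi>) V G k \<bullet> h = df (\<Phi> G) \<bullet> \<Phi> (G(k := h))"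
proof -
  obtain B where B: "orthonormal_basis_of B (V k)"
    using subspace_has_orthonormal_basis[OF subspace_slot[OF k]] .
  define A where "A h = (\<Sum>b\<in>B. (h \<bullet> b) *\<^sub>R \<Phi> (G(k := b)))" for h
  define g where "g = (\<Sum>b\<in>B. (df (\<Phi> G) \<bullet> \<Phi> (G(k := b))) *\<^sub>R b)"
  have g_in: "g \<in> V k"
    using B subspace_slot[OF k] unfolding g_def orthonormal_basis_of_def
    by (auto intro!: subspace_sum subspace_scale)
  have slot_eq_A: "\<Phi> (G(k := h)) = A h" if "h \<in> V k" for h
    using slot_expansion[OF cores_fun_upd[OF G k that] k B] unfolding A_def by simp
  have g_inner: "g \<bullet> h = df (\<Phi> G) \<bullet> A h" for h
    unfolding g_def A_def by (simp add: inner_sum_left inner_sum_right inner_commute mult.commute)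
  have "bounded_linear A"
    unfolding A_def
    by (intro bounded_linear_sum bounded_linear_compose[OF bounded_linear_scaleR_left bounded_linear_inner_left])
  then have "((\<lambda>h. \<Phi> G + A h) has_derivative A) (at 0 within V k)"
    by (auto intro!: derivative_eq_intros bounded_linear_imp_has_derivative)
  then have "((\<lambda>h. f (\<Phi> G + A h)) has_derivative (\<lambda>h. df (\<Phi> G + A 0) \<bullet> A h)) (at 0 within V k)"
    by (rule has_derivative_compose[OF _ f])
  then have "((\<lambda>h. f (\<Phi> G + A h)) has_derivative (\<lambda>h. g \<bullet> h)) (at 0 within V k)"
    unfolding g_inner by (simp add: A_def)
  moreover have "f (\<Phi> G + A h) = (f \<circ> \<Phi>) (G(k := G k + h))" if "h \<in> V k" for h
    using slot_add[OF G k cores_slot[OF G k] that] slot_eq_A[OF that] by simp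
  ultimately have "((\<lambda>h. (f \<circ> \<Phi>) (G(k := G k + h))) has_derivative (\<lambda>h. g \<bullet> h)) (at 0 within V k)"
    by (rule has_derivative_transform_within[OF _ zero_less_one subspace_0[OF subspace_slot[OF k]]]) simp
  then have "pgrad (f \<circ> \<Phi>) V G k = g"
    using pgrad_eqI[of V k g] subspace_slot[OF k] g_in by blast
  then show "pgrad (f \<circ> \<Phi>) V G k \<in> V k" and "\<And>h. h \<in> V k \<Longrightarrow> pgrad (f \<circ> \<Phi>) V G k \<bullet> h = df (\<Phi> G) \<bullet> \<Phi> (G(k := h))"
    using g_in g_inner slot_eq_A by simp_all
qed

lemma inner_slot_pgrad_comp:
  assumes "\<And>x. (f has_derivative (\<lambda>h. df x \<bullet> h)) (at x)" "G \<in> cores K V" "k \<in> {1..K}"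
  shows "G k \<bullet> pgrad (f \<circ> \<Phi>) V G k = df (\<Phi> G) \<bullet> \<Phi> G"
  using inner_pgrad_comp[OF assms cores_slot[OF assms(2,3)]] by (simp add: inner_commute)

lemma sam_perturb_in_cores:
  assumes "\<And>x. (f has_derivative (\<lambda>h. df x \<bullet> h)) (at x)" "G \<in> cores K V"
  shows "sam_perturb (f \<circ> \<Phi>) V K \<rho> G \<in> cores K V"
  using assms cores_slot[OF assms(2)] pgrad_comp_in_slot[OF assms] subspace_slot
  unfolding cores_def sam_perturb_def sam_grads_def
  by (auto intro!: subspace_add subspace_scale)

lemma sam_flow_norm_balance_deriv:
  fixes f :: "'w \<Rightarrow> real" and G :: "nat \<Rightarrow> 'v" and \<rho> :: real and \<gamma> :: "real \<Rightarrow> nat \<Rightarrow> 'v"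
  defines "g \<equiv> sam_grads (f \<circ> \<Phi>) V K G" and "g' \<equiv> sam_tgrads (f \<circ> \<Phi>) V K \<rho> G"
    and "u \<equiv> sam_u (f \<circ> \<Phi>) V K G"
  assumes f: "\<And>x. (f has_derivative (\<lambda>h. df x \<bullet> h)) (at x)" and G: "G \<in> cores K V"
    and i: "i \<in> {1..K}" and j: "j \<in> {1..K}"
    and flow: "\<gamma> t0 = G" "\<And>k. k \<in> {1..K} \<Longrightarrow> ((\<lambda>t. \<gamma> t k) has_vector_derivative - g' k) (at t0)"
  shows "((\<lambda>t. (norm (\<gamma> t i))\<^sup>2 - (norm (\<gamma> t j))\<^sup>2) has_real_derivative
      2 * \<rho> * u * ((norm (g i))\<^sup>2 - (norm (g j))\<^sup>2)
      + 2 * \<rho> * u * (g i \<bullet> (g' i - g i) - g j \<bullet> (g' j - g j))) (at t0)"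
proof -
  let ?G' = "sam_perturb (f \<circ> \<Phi>) V K \<rho> G"
  have slot_inner: "G k \<bullet> g' k = df (\<Phi> ?G') \<bullet> \<Phi> ?G' - \<rho> * u * (g k \<bullet> g' k)" if k: "k \<in> {1..K}" for k
  proof -
    have "G k = ?G' k - (\<rho> * u) *\<^sub>R g k"
      by (simp add: sam_perturb_def g_def u_def)
    moreover have "?G' k \<bullet> g' k = df (\<Phi> ?G') \<bullet> \<Phi> ?G'"
      using inner_slot_pgrad_comp[OF f sam_perturb_in_cores[OF f G, of \<rho>] k]
      unfolding g'_def sam_tgrads_def by (simp add: sam_grads_slot[OF k])
    ultimately show ?thesis
      by (simp add: inner_diff_left)
  qed
  have "((\<lambda>t. (norm (\<gamma> t k))\<^sup>2) has_real_derivative - 2 * (G k \<bullet> g' k)) (at t0)" if "k \<in> {1..K}" for k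
    using has_real_derivative_norm_power2[OF flow(2)[OF that]] flow(1) by simp
  from DERIV_diff[OF this[OF i] this[OF j]] show ?thesis
    using slot_inner[OF i] slot_inner[OF j]
    by (simp add: inner_diff_right power2_norm_eq_inner algebra_simps)
qed

end

locale bounded_multilinear_cores = multilinear_cores +
  fixes M :: real
  assumes bound_nonneg: "0 \<le> M"
    and norm_le_prod: "X \<in> cores K V \<Longrightarrow> norm (\<Phi> X) \<le> M * (\<Prod>l\<in>{1..K}. norm (X l))"
begin

lemma norm_le_slot:
  assumes X: "X \<in> cores K V" and k: "k \<in> {1..K}" and r: "\<And>l. l \<in> {1..K} - {k} \<Longrightarrow> norm (X l) \<le> r"
  shows "norm (\<Phi> X) \<le> M * r ^ (K - 1) * norm (X k)"
proof -
  have "(\<Prod>l\<in>{1..K} - {k}. norm (X l)) \<le> (\<Prod>l\<in>{1..K} - {k}. r)"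
    using r by (intro prod_mono) auto
  also have "\<dots> = r ^ (K - 1)"
    using k by (simp add: card_Diff_singleton)
  finally have "(\<Prod>l\<in>{1..K}. norm (X l)) \<le> norm (X k) * r ^ (K - 1)"
    using k by (simp add: prod.remove mult_left_mono)
  then have "M * (\<Prod>l\<in>{1..K}. norm (X l)) \<le> M * (norm (X k) * r ^ (K - 1))"
    using bound_nonneg by (rule mult_left_mono)
  with norm_le_prod[OF X] show ?thesis
    by (simp add: mult_ac)
qed

lemma norm_diff_le:
  assumes X: "X \<in> cores K V" and Y: "Y \<in> cores K V"
    and bounds: "\<And>l. l \<in> {1..K} \<Longrightarrow> norm (X l) \<le> r \<and> norm (Y l) \<le> r \<and> norm (X l - Y l) \<le> \<delta>"
  shows "norm (\<Phi> X - \<Phi> Y) \<le> K * M * r ^ (K - 1) * \<delta>"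
proof -
  define Z where "Z m l = (if l \<le> m then X l else Y l)" for m l
  have Z_in: "Z m \<in> cores K V" for m
    using X Y unfolding cores_def Z_def by auto
  have step: "norm (\<Phi> (Z (Suc n)) - \<Phi> (Z n)) \<le> M * r ^ (K - 1) * \<delta>" if "n < K" for n
  proof -
    have k: "Suc n \<in> {1..K}" using that by simp
    have "Z (Suc n) = (Z n)(Suc n := X (Suc n))" "Z n = (Z n)(Suc n := Y (Suc n))"
      unfolding Z_def by auto
    then have "\<Phi> (Z (Suc n)) - \<Phi> (Z n) = \<Phi> ((Z n)(Suc n := X (Suc n) - Y (Suc n)))"
      using slot_diff[OF Z_in k cores_slot[OF X k] cores_slot[OF Y k]] by metis
    also have "norm \<dots> \<le> M * r ^ (K - 1) * norm (((Z n)(Suc n := X (Suc n) - Y (Suc n))) (Suc n))"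
      using subspace_diff[OF subspace_slot[OF k] cores_slot[OF X k] cores_slot[OF Y k]]
      by (rule norm_le_slot[OF cores_fun_upd[OF Z_in k] k]) (simp add: Z_def bounds)
    also have "\<dots> \<le> M * r ^ (K - 1) * \<delta>"
    proof (rule mult_left_mono)
      have "0 \<le> r"
        using bounds[OF k] norm_ge_zero order_trans by blast
      then show "0 \<le> M * r ^ (K - 1)"
        using bound_nonneg by simp
    qed (use bounds[OF k] in simp)
    finally show ?thesis .
  qed
  have "Z 0 = Y" "Z K = X"
    using X Y unfolding cores_def Z_def by auto
  then have "\<Phi> X - \<Phi> Y = (\<Sum>n<K. \<Phi> (Z (Suc n)) - \<Phi> (Z n))"
    using sum_lessThan_telescope[of "\<lambda>n. \<Phi> (Z n)" K] by simp
  also have "norm \<dots> \<le> (\<Sum>n<K. M * r ^ (K - 1) * \<delta>)"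
    using step by (intro order_trans[OF norm_sum] sum_mono) auto
  finally show ?thesis by simp
qed

lemma norm_pgrad_comp_diff_le:
  assumes f: "\<And>x. (f has_derivative (\<lambda>h. df x \<bullet> h)) (at x)"
    and L: "\<And>x y. norm (df x - df y) \<le> L * norm (x - y)"
    and X: "X \<in> cores K V" and Y: "Y \<in> cores K V" and k: "k \<in> {1..K}" and r: "1 \<le> r"
    and bounds: "\<And>l. l \<in> {1..K} \<Longrightarrow> norm (X l) \<le> r \<and> norm (Y l) \<le> r \<and> norm (X l - Y l) \<le> \<delta>"
  shows "norm (pgrad (f \<circ> \<Phi>) V X k - pgrad (f \<circ> \<Phi>) V Y k)
    \<le> K * M * r ^ (K - 1) * (\<bar>L\<bar> * M * r ^ (K - 1) + norm (df (\<Phi> Y))) * \<delta>"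
proof -
  define d where "d = pgrad (f \<circ> \<Phi>) V X k - pgrad (f \<circ> \<Phi>) V Y k"
  define e where "e = (1 / norm d) *\<^sub>R d"
  let ?c = "K * M * r ^ (K - 1)"
  have "0 \<le> \<delta>" "0 \<le> M * r ^ (K - 1)"
    using bounds[OF k] r bound_nonneg by (auto intro: order_trans[OF norm_ge_zero])
  then have "0 \<le> ?c * \<delta>"
    by (metis mult.assoc mult_nonneg_nonneg of_nat_0_le_iff)
  have "d \<in> V k"
    unfolding d_def using pgrad_comp_in_slot[OF f X k] pgrad_comp_in_slot[OF f Y k]
    by (rule subspace_diff[OF subspace_slot[OF k]])
  then have e_in: "e \<in> V k"
    unfolding e_def by (rule subspace_scale[OF subspace_slot[OF k]])
  have "norm e \<le> 1"
    by (simp add: e_def)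
  have norm_d: "norm d = d \<bullet> e"
    by (cases "d = 0") (simp_all add: e_def power2_norm_eq_inner[symmetric] power2_eq_square)
  have "norm (\<Phi> X - \<Phi> Y) \<le> ?c * \<delta>"
    by (rule norm_diff_le[OF X Y bounds])
  then have df_diff: "norm (df (\<Phi> X) - df (\<Phi> Y)) \<le> \<bar>L\<bar> * (?c * \<delta>)"
    using L[of "\<Phi> X" "\<Phi> Y"] abs_ge_self[of L]
    by (meson abs_ge_zero mult_left_mono mult_right_mono norm_ge_zero order_trans)
  have Phi_e: "norm (\<Phi> (X(k := e))) \<le> M * r ^ (K - 1)"
    using norm_le_slot[OF cores_fun_upd[OF X k e_in] k, of r] bounds \<open>norm e \<le> 1\<close>
      mult_left_le[OF \<open>norm e \<le> 1\<close> \<open>0 \<le> M * r ^ (K - 1)\<close>] by simp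
  have Phi_e_diff: "norm (\<Phi> (X(k := e)) - \<Phi> (Y(k := e))) \<le> ?c * \<delta>"
    using bounds \<open>norm e \<le> 1\<close> \<open>0 \<le> \<delta>\<close> r
    by (intro norm_diff_le[OF cores_fun_upd[OF X k e_in] cores_fun_upd[OF Y k e_in]]) auto
  have "norm d = (df (\<Phi> X) - df (\<Phi> Y)) \<bullet> \<Phi> (X(k := e)) + df (\<Phi> Y) \<bullet> (\<Phi> (X(k := e)) - \<Phi> (Y(k := e)))"
    using norm_d inner_pgrad_comp[OF f X k e_in] inner_pgrad_comp[OF f Y k e_in]
    unfolding d_def by (simp add: inner_diff_left inner_diff_right)
  also have "\<dots> \<le> norm (df (\<Phi> X) - df (\<Phi> Y)) * norm (\<Phi> (X(k := e)))
      + norm (df (\<Phi> Y)) * norm (\<Phi> (X(k := e)) - \<Phi> (Y(k := e)))"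
    by (intro add_mono Cauchy_Schwarz_ineq2[THEN abs_le_D1])
  also have "\<dots> \<le> \<bar>L\<bar> * (?c * \<delta>) * (M * r ^ (K - 1)) + norm (df (\<Phi> Y)) * (?c * \<delta>)"
    using df_diff Phi_e Phi_e_diff \<open>0 \<le> ?c * \<delta>\<close>
    by (intro add_mono mult_mono) auto
  finally show ?thesis
    unfolding d_def by (simp add: algebra_simps)
qed

text \<open>With n l = ||G_l|| and rho <= 1, the radius 1 + sum n {1..K} bounds all cores of G and of
  its SAM perturbation.\<close>

definition remainder_coeff :: "real \<Rightarrow> (nat \<Rightarrow> real) \<Rightarrow> real \<Rightarrow> real" where
  "remainder_coeff L n D = 4 * (K * M * (1 + sum n {1..K}) ^ (K - 1))
     * (\<bar>L\<bar> * M * (1 + sum n {1..K}) ^ (K - 1) + D)"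

lemma sam_norm_balance:
  assumes f: "\<And>x. (f has_derivative (\<lambda>h. df x \<bullet> h)) (at x)"
    and L: "\<And>x y. norm (df x - df y) \<le> L * norm (x - y)"
    and G: "G \<in> cores K V" and nonzero: "\<exists>k\<in>{1..K}. sam_grads (f \<circ> \<Phi>) V K G k \<noteq> 0"
    and \<rho>: "0 < \<rho>" "\<rho> \<le> 1" and i: "i \<in> {1..K}" and j: "j \<in> {1..K}"
    and flow: "\<gamma> t0 = G"
      "\<And>k. k \<in> {1..K} \<Longrightarrow> ((\<lambda>t. \<gamma> t k) has_vector_derivative - sam_tgrads (f \<circ> \<Phi>) V K \<rho> G k) (at t0)"
  shows "\<exists>R. ((\<lambda>t. (norm (\<gamma> t i))\<^sup>2 - (norm (\<gamma> t j))\<^sup>2) has_real_derivative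
      2 * \<rho> * sam_u (f \<circ> \<Phi>) V K G *
        ((norm (sam_grads (f \<circ> \<Phi>) V K G i))\<^sup>2 - (norm (sam_grads (f \<circ> \<Phi>) V K G j))\<^sup>2)
      + R) (at t0) \<and>
    \<bar>R\<bar> \<le> remainder_coeff L (\<lambda>k. norm (G k)) (norm (df (\<Phi> G))) * \<rho>\<^sup>2"
proof -
  let ?g = "sam_grads (f \<circ> \<Phi>) V K G" and ?g' = "sam_tgrads (f \<circ> \<Phi>) V K \<rho> G"
  let ?G' = "sam_perturb (f \<circ> \<Phi>) V K \<rho> G"
  define r where "r = 1 + (\<Sum>l=1..K. norm (G l))"
  define c where "c = K * M * r ^ (K - 1) * (\<bar>L\<bar> * M * r ^ (K - 1) + norm (df (\<Phi> G)))"
  have bounds: "norm (?G' l) \<le> r \<and> norm (G l) \<le> r \<and> norm (?G' l - G l) \<le> \<rho>"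
    if "l \<in> {1..K}" for l
  proof -
    have "norm (G l) \<le> r - 1"
      unfolding r_def using that by simp (intro member_le_sum; simp)
    moreover have "norm (?G' l - G l) \<le> \<rho>"
      using norm_sam_perturb_diff_le[OF nonzero] \<rho> by simp
    ultimately show ?thesis
      using \<rho> norm_triangle_sub[of "?G' l" "G l"] by linarith
  qed
  have "1 \<le> r"
    unfolding r_def by (simp add: sum_nonneg)
  have "norm (?g' k - ?g k) \<le> c * \<rho>" if k: "k \<in> {1..K}" for k
    using norm_pgrad_comp_diff_le[OF f L sam_perturb_in_cores[OF f G] G k \<open>1 \<le> r\<close> bounds]
    unfolding sam_tgrads_def sam_grads_slot[OF k] c_def .
  then have "\<bar>2 * \<rho> * sam_u (f \<circ> \<Phi>) V K G * (?g i \<bullet> (?g' i - ?g i) - ?g j \<bullet> (?g' j - ?g j))\<bar>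
      \<le> 4 * c * \<rho>\<^sup>2"
    using i j \<rho> sam_u_pos_mult_norm_le[OF nonzero]
    by (intro abs_sam_remainder_le) (auto simp: less_imp_le)
  then show ?thesis
    using sam_flow_norm_balance_deriv[OF f G i j flow]
    unfolding remainder_coeff_def c_def r_def by (auto simp: mult.assoc)
qed

end

theorem theorem2:
  fixes K :: nat
    and V :: "nat \<Rightarrow> ('v::euclidean_space) set"
    and \<Phi> :: "(nat \<Rightarrow> 'v) \<Rightarrow> 'w::euclidean_space"
  assumes "K \<ge> 2"
    and "\<forall>k\<in>{1..K}. subspace (V k)"
    and "multilinear_on K V \<Phi>"
  shows "\<exists>C :: real \<Rightarrow> (nat \<Rightarrow> real) \<Rightarrow> real \<Rightarrow> real.
    \<forall>(L::real) (f::'w \<Rightarrow> real) (df::'w \<Rightarrow> 'w) (G::nat \<Rightarrow> 'v) (\<gamma>::real \<Rightarrow> nat \<Rightarrow> 'v)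
      (t0::real) (\<rho>::real) (i::nat) (j::nat).
      (\<forall>x. (f has_derivative (\<lambda>h. df x \<bullet> h)) (at x)) \<and>
      (\<forall>x y. norm (df x - df y) \<le> L * norm (x - y)) \<and>
      G \<in> cores K V \<and>
      (\<exists>k\<in>{1..K}. sam_grads (f \<circ> \<Phi>) V K G k \<noteq> 0) \<and>
      0 < \<rho> \<and> \<rho> \<le> 1 \<and>
      i \<in> {1..K} \<and> j \<in> {1..K} \<and> i \<noteq> j \<and>
      \<gamma> t0 = G \<and>
      (\<forall>k\<in>{1..K}. ((\<lambda>t. \<gamma> t k) has_vector_derivative
                       - sam_tgrads (f \<circ> \<Phi>) V K \<rho> G k) (at t0))
      \<longrightarrow>
      (\<exists>R. ((\<lambda>t. (norm (\<gamma> t i))\<^sup>2 - (norm (\<gamma> t j))\<^sup>2) has_real_derivative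
              2 * \<rho> * sam_u (f \<circ> \<Phi>) V K G *
                ((norm (sam_grads (f \<circ> \<Phi>) V K G i))\<^sup>2 - (norm (sam_grads (f \<circ> \<Phi>) V K G j))\<^sup>2)
              + R) (at t0) \<and>
           \<bar>R\<bar> \<le> C L (\<lambda>k. norm (G k)) (norm (df (\<Phi> G))) * \<rho>\<^sup>2)"
proof -
  interpret multilinear_cores K V \<Phi>
    using assms(2,3) by unfold_locales auto
  obtain M where "bounded_multilinear_cores K V \<Phi> M"
    using ex_norm_le_prod bounded_multilinear_cores.intro[OF multilinear_cores_axioms]
    by (metis bounded_multilinear_cores_axioms.intro)
  then interpret bounded_multilinear_cores K V \<Phi> M .
  show ?thesis
    by (intro exI[of _ remainder_coeff] allI impI, elim conjE) (rule sam_norm_balance; blast)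
qed

end
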